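(* If $\mathcal A$ and $\mathcal B$ are two distinct $\sigma$-subfields, then $\|\mathbb P_{\mathcal A}-\mathbb P_{\mathcal B}\|_{L^1\to L^1}\ge1$ and $\|\mathbb P_{\mathcal A}-\mathbb P_{\mathcal B}\|_{L^\infty\to L^\infty}\ge1/2$. Consequently, if $(\mathcal B_n)_{n\in\mathbb N_0}$ are $\sigma$-subfields with $\|\mathbb P_{\mathcal B_n}-\mathbb P_{\mathcal B_0}\|_{L^p\to L^p}\to0$ for $p=1$ or $p=\infty$, then $\mathcal B_n=\mathcal B_0$ for all sufficiently large $n$.
   Context: Let $(\Omega,\mathcal F,\mathbb P)$ be a (not necessarily complete) probability space and $\mathcal N:=\{F\in\mathcal F:\mathbb P(F)=0\}$. A $\sigma$-subfield is a sub-$\sigma$-field $\mathcal A\subset\mathcal F$ with $\mathcal A=\sigma(\mathcal A\cup\mathcal N)$. For a $\sigma$-subfield $\mathcal A$, $\mathbb P_{\mathcal A}f:=\mathbb E^{\mathbb P}[f\mid\mathcal A]$, viewed as a bounded linear operator on the real normed space $L^p(\mathbb P)$; $\|\cdot\|_{L^p\to L^p}$ is the operator norm. *)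

theory Defs
  imports "HOL-Probability.Probability"
begin

definition sigma_subfield :: "'a measure \<Rightarrow> 'a set set \<Rightarrow> bool" where
  "sigma_subfield M A \<longleftrightarrow> A \<subseteq> sets M \<and> sigma_algebra (space M) A
     \<and> A = sigma_sets (space M) (A \<union> null_sets M)"

definition cond_exp_sf :: "'a measure \<Rightarrow> 'a set set \<Rightarrow> ('a \<Rightarrow> real) \<Rightarrow> 'a \<Rightarrow> real" where
  "cond_exp_sf M A f = real_cond_exp M (sigma (space M) A) f"

definition L1_norm :: "'a measure \<Rightarrow> ('a \<Rightarrow> real) \<Rightarrow> ereal" where
  "L1_norm M f = ereal (\<integral>x. \<bar>f x\<bar> \<partial>M)"

definition Linf_norm :: "'a measure \<Rightarrow> ('a \<Rightarrow> real) \<Rightarrow> ereal" where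
  "Linf_norm M f = esssup M (\<lambda>x. ereal \<bar>f x\<bar>)"

definition opnorm_L1 :: "'a measure \<Rightarrow> 'a set set \<Rightarrow> 'a set set \<Rightarrow> ereal" where
  "opnorm_L1 M A B = (SUP f \<in> {f. integrable M f \<and> L1_norm M f \<le> 1}.
      L1_norm M (\<lambda>x. cond_exp_sf M A f x - cond_exp_sf M B f x))"

definition opnorm_Linf :: "'a measure \<Rightarrow> 'a set set \<Rightarrow> 'a set set \<Rightarrow> ereal" where
  "opnorm_Linf M A B = (SUP f \<in> {f. f \<in> borel_measurable M \<and> Linf_norm M f \<le> 1}.
      Linf_norm M (\<lambda>x. cond_exp_sf M A f x - cond_exp_sf M B f x))"

end

theory Submission
  imports Defs
begin

text \<open>Let \<open>F \<in> \<A> - \<B>\<close>, \<open>s = 2\<cdot>1\<^sub>F - 1\<close> and \<open>k = P\<^sub>\<B> s\<close>. If \<open>k > 0\<close> a.e. on \<open>F\<close> and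
  \<open>k < 0\<close> a.e. off \<open>F\<close>, then \<open>F\<close> differs from the \<open>\<B>\<close>-set \<open>{k > 0}\<close> by a null set, so
  \<open>F \<in> \<B>\<close>. Hence, after possibly replacing \<open>s\<close> by \<open>-s\<close>, there is a set \<open>D\<close> of positive
  measure on which \<open>s = 1\<close> and \<open>P\<^sub>\<B> s \<le> 0\<close>, i.e. \<open>(P\<^sub>\<A> - P\<^sub>\<B>) s = s - P\<^sub>\<B> s \<ge> 1\<close>. With \<open>s\<close> as
  test function this bounds the \<open>L\<^sup>\<infinity>\<close> norm of \<open>P\<^sub>\<A> - P\<^sub>\<B>\<close> from below even by 1. For \<open>L\<^sup>1\<close>
  take \<open>f = 1\<^sub>D / \<bbbP>(D)\<close>; self-adjointness of conditional expectations gives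
  \<open>\<parallel>(P\<^sub>\<A> - P\<^sub>\<B>) f\<parallel>\<^sub>1 \<ge> \<integral> s (P\<^sub>\<A> - P\<^sub>\<B>) f = \<integral> (s - P\<^sub>\<B> s) f \<ge> \<integral> f = 1\<close>.\<close>

lemma sets_sigma_subfield:
  assumes "sigma_subfield M A"
  shows "sets (sigma (space M) A) = A"
proof -
  have "A \<subseteq> Pow (space M)"
    using assms sets.sets_into_space unfolding sigma_subfield_def by blast
  then show ?thesis
    using assms sigma_algebra.sigma_sets_eq[of "space M" A] unfolding sigma_subfield_def
    by (simp add: sets_measure_of)
qed

lemma subalgebra_sigma_subfield:
  assumes "sigma_subfield M A"
  shows "subalgebra M (sigma (space M) A)"
  using assms sets_sigma_subfield[OF assms]
  unfolding subalgebra_def sigma_subfield_def by (simp add: space_measure_of_conv)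

lemma (in finite_measure) sigma_finite_subalgebra_sigma_subfield:
  assumes "sigma_subfield M A"
  shows "sigma_finite_subalgebra M (sigma (space M) A)"
  by (intro finite_measure_subalgebra_is_sigma_finite)
    (simp add: finite_measure_subalgebra_def finite_measure_subalgebra_axioms_def
      subalgebra_sigma_subfield[OF assms] finite_measure_axioms)

lemma null_sets_subset_sigma_subfield:
  assumes "sigma_subfield M A" and "N \<in> null_sets M"
  shows "N \<in> A"
proof -
  have "N \<in> sigma_sets (space M) (A \<union> null_sets M)"
    using assms(2) by (intro sigma_sets.Basic) auto
  with assms(1) show ?thesis unfolding sigma_subfield_def by auto
qed

lemma sigma_subfield_null_symdiff:
  assumes B: "sigma_subfield M B" and "E \<in> B"
    and "F - E \<in> null_sets M" and "E - F \<in> null_sets M"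
  shows "F \<in> B"
proof -
  interpret sigma_algebra "space M" B
    using B unfolding sigma_subfield_def by auto
  have "(E - (E - F)) \<union> (F - E) \<in> B"
    using assms null_sets_subset_sigma_subfield[OF B] by auto
  moreover have "(E - (E - F)) \<union> (F - E) = F" by auto
  ultimately show ?thesis by simp
qed

lemma opnorm_L1_commute: "opnorm_L1 M A B = opnorm_L1 M B A"
  unfolding opnorm_L1_def L1_norm_def by (simp add: abs_minus_commute)

lemma opnorm_Linf_commute: "opnorm_Linf M A B = opnorm_Linf M B A"
  unfolding opnorm_Linf_def Linf_norm_def by (simp add: abs_minus_commute)

lemma esssup_ge_of_AE_on_pos_measure:
  assumes "D \<in> sets M" and "emeasure M D > 0"
    and "AE x in M. x \<in> D \<longrightarrow> c \<le> f x"
  shows "c \<le> esssup M f"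
proof (rule ccontr)
  assume less: "\<not> c \<le> esssup M f"
  from esssup_AE[of f M] assms(3) have "AE x in M. x \<notin> D"
    by eventually_elim (use less in \<open>auto dest: order.trans\<close>)
  then have "emeasure M D = 0"
    using AE_iff_measurable[OF assms(1), of "\<lambda>x. x \<notin> D"] sets.sets_into_space[OF assms(1)]
    by auto
  with assms(2) show False by simp
qed

lemma (in sigma_finite_subalgebra) integral_mult_real_cond_exp_commute:
  assumes [measurable]: "integrable M f" "integrable M g"
    and f_bd: "\<And>x. \<bar>f x\<bar> \<le> Cf" and g_bd: "\<And>x. \<bar>g x\<bar> \<le> Cg"
  shows "(\<integral>x. g x * real_cond_exp M F f x \<partial>M) = (\<integral>x. real_cond_exp M F g x * f x \<partial>M)"
proof -
  have [measurable]: "f \<in> borel_measurable M" "g \<in> borel_measurable M" by simp_all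
  have "integrable M (\<lambda>x. real_cond_exp M F f x * g x)"
    by (rule Bochner_Integration.integrable_bound
        [OF integrable_mult_right[OF real_cond_exp_int(1)[OF assms(1)], of Cg]])
      (auto simp: abs_mult mult.commute intro!: mult_right_mono order.trans[OF g_bd abs_ge_self])
  then have "(\<integral>x. real_cond_exp M F f x * g x \<partial>M)
      = (\<integral>x. real_cond_exp M F f x * real_cond_exp M F g x \<partial>M)"
    by (intro real_cond_exp_intg(2)[symmetric]) simp_all
  also have "\<dots> = (\<integral>x. real_cond_exp M F g x * f x \<partial>M)"
  proof -
    have "integrable M (\<lambda>x. real_cond_exp M F g x * f x)"
      by (rule Bochner_Integration.integrable_bound
          [OF integrable_mult_right[OF real_cond_exp_int(1)[OF assms(2)], of Cf]])
        (auto simp: abs_mult mult.commute intro!: mult_right_mono order.trans[OF f_bd abs_ge_self])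
    then show ?thesis
      by (subst real_cond_exp_intg(2)[symmetric]) (simp_all add: mult.commute)
  qed
  finally show ?thesis by (simp add: mult.commute)
qed

context prob_space
begin

lemma opnorm_Linf_ge_one:
  assumes A: "sigma_subfield M A"
    and s_meas: "s \<in> borel_measurable (sigma (space M) A)" and s_bd: "\<And>x. \<bar>s x\<bar> \<le> 1"
    and D: "D \<in> sets M" "prob D > 0"
    and on_D: "AE x in M. x \<in> D \<longrightarrow> s x = 1 \<and> cond_exp_sf M B s x \<le> 0"
  shows "1 \<le> opnorm_Linf M A B"
proof -
  interpret SA: sigma_finite_subalgebra M "sigma (space M) A"
    by (rule sigma_finite_subalgebra_sigma_subfield[OF A])
  have [measurable]: "s \<in> borel_measurable M"
    by (rule measurable_from_subalg[OF SA.subalg s_meas])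
  have "integrable M s"
    by (rule integrable_const_bound[where B=1]) (use s_bd in auto)
  then have "AE x in M. cond_exp_sf M A s x = s x"
    unfolding cond_exp_sf_def by (rule SA.real_cond_exp_F_meas[OF _ s_meas])
  with on_D have "AE x in M. x \<in> D \<longrightarrow> 1 \<le> ereal \<bar>cond_exp_sf M A s x - cond_exp_sf M B s x\<bar>"
    by eventually_elim auto
  then have "1 \<le> Linf_norm M (\<lambda>x. cond_exp_sf M A s x - cond_exp_sf M B s x)"
    unfolding Linf_norm_def using D
    by (intro esssup_ge_of_AE_on_pos_measure) (auto simp: emeasure_eq_measure)
  also have "\<dots> \<le> opnorm_Linf M A B"
    unfolding opnorm_Linf_def Linf_norm_def using s_bd by (intro SUP_upper esssup_I) auto
  finally show ?thesis .
qed

lemma integral_mult_cond_exp_sf_diff: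
  assumes A: "sigma_subfield M A" and B: "sigma_subfield M B"
    and s_meas: "s \<in> borel_measurable (sigma (space M) A)" and s_bd: "\<And>x. \<bar>s x\<bar> \<le> 1"
    and f_int: "integrable M f" and f_bd: "\<And>x. \<bar>f x\<bar> \<le> C"
  shows "integrable M (\<lambda>x. (s x - cond_exp_sf M B s x) * f x)"
    and "(\<integral>x. s x * (cond_exp_sf M A f x - cond_exp_sf M B f x) \<partial>M)
      = (\<integral>x. (s x - cond_exp_sf M B s x) * f x \<partial>M)"
proof -
  interpret SA: sigma_finite_subalgebra M "sigma (space M) A"
    by (rule sigma_finite_subalgebra_sigma_subfield[OF A])
  interpret SB: sigma_finite_subalgebra M "sigma (space M) B"
    by (rule sigma_finite_subalgebra_sigma_subfield[OF B])
  have [measurable]: "s \<in> borel_measurable M" "f \<in> borel_measurable M"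
    using measurable_from_subalg[OF SA.subalg s_meas] f_int by simp_all
  have s_int: "integrable M s"
    by (rule integrable_const_bound[where B=1]) (use s_bd in auto)
  have s_mult_int: "integrable M (\<lambda>x. s x * g x)" if "integrable M g" for g
    by (rule Bochner_Integration.integrable_bound[OF that])
      (use that s_bd in \<open>auto simp: abs_mult mult_left_le_one_le\<close>)
  have ints: "integrable M (cond_exp_sf M A f)" "integrable M (cond_exp_sf M B f)"
    "integrable M (cond_exp_sf M B s)"
    unfolding cond_exp_sf_def
    by (simp_all add: SA.real_cond_exp_int(1)[OF f_int] SB.real_cond_exp_int(1)[OF f_int]
        SB.real_cond_exp_int(1)[OF s_int])
  have kf_int: "integrable M (\<lambda>x. cond_exp_sf M B s x * f x)"
    by (rule Bochner_Integration.integrable_bound[OF integrable_mult_right[OF ints(3), of C]])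
      (auto simp: abs_mult mult.commute cond_exp_sf_def
        intro!: mult_right_mono order.trans[OF f_bd abs_ge_self])
  then show "integrable M (\<lambda>x. (s x - cond_exp_sf M B s x) * f x)"
    by (simp add: left_diff_distrib s_mult_int f_int)
  have "(\<integral>x. s x * (cond_exp_sf M A f x - cond_exp_sf M B f x) \<partial>M)
      = (\<integral>x. s x * cond_exp_sf M A f x \<partial>M) - (\<integral>x. s x * cond_exp_sf M B f x \<partial>M)"
    by (simp add: right_diff_distrib
        Bochner_Integration.integral_diff[OF s_mult_int[OF ints(1)] s_mult_int[OF ints(2)]])
  also have "\<dots> = (\<integral>x. s x * f x \<partial>M) - (\<integral>x. cond_exp_sf M B s x * f x \<partial>M)"
    using SA.real_cond_exp_intg(2)[OF s_mult_int[OF f_int] s_meas]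
      SB.integral_mult_real_cond_exp_commute[OF f_int s_int f_bd s_bd]
    by (simp add: cond_exp_sf_def)
  also have "\<dots> = (\<integral>x. (s x - cond_exp_sf M B s x) * f x \<partial>M)"
    by (simp add: left_diff_distrib
        Bochner_Integration.integral_diff[OF s_mult_int[OF f_int] kf_int])
  finally show "(\<integral>x. s x * (cond_exp_sf M A f x - cond_exp_sf M B f x) \<partial>M)
      = (\<integral>x. (s x - cond_exp_sf M B s x) * f x \<partial>M)" .
qed

lemma opnorm_L1_ge_one:
  assumes A: "sigma_subfield M A" and B: "sigma_subfield M B"
    and s_meas: "s \<in> borel_measurable (sigma (space M) A)" and s_bd: "\<And>x. \<bar>s x\<bar> \<le> 1"
    and D: "D \<in> sets M" "prob D > 0"
    and on_D: "AE x in M. x \<in> D \<longrightarrow> s x = 1 \<and> cond_exp_sf M B s x \<le> 0"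
  shows "1 \<le> opnorm_L1 M A B"
proof -
  have [measurable]: "s \<in> borel_measurable M"
    by (rule measurable_from_subalg[OF subalgebra_sigma_subfield[OF A] s_meas])
  define f where "f x = indicator D x / prob D" for x
  define g where "g x = cond_exp_sf M A f x - cond_exp_sf M B f x" for x
  have f_bd: "\<bar>f x\<bar> \<le> 1 / prob D" for x
    using D by (auto simp: f_def indicator_def)
  have f_nonneg: "0 \<le> f x" for x
    using D by (simp add: f_def)
  have [measurable]: "f \<in> borel_measurable M"
    unfolding f_def using D(1) by measurable
  have f_int: "integrable M f"
    by (rule integrable_const_bound[where B="1 / prob D"]) (use f_bd in auto)
  have int_f: "(\<integral>x. f x \<partial>M) = 1"
    using D by (simp add: f_def Int_absorb2 sets.sets_into_space)
  have g_int: "integrable M g"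
    unfolding g_def cond_exp_sf_def
    using sigma_finite_subalgebra.real_cond_exp_int(1)
        [OF sigma_finite_subalgebra_sigma_subfield f_int] A B
    by simp
  have "AE x in M. f x \<le> (s x - cond_exp_sf M B s x) * f x"
    using on_D
  proof eventually_elim
    case (elim x)
    show ?case
    proof (cases "x \<in> D")
      case True
      with elim have "1 \<le> s x - cond_exp_sf M B s x" by simp
      from mult_right_mono[OF this f_nonneg] show ?thesis by simp
    qed (simp add: f_def)
  qed
  then have "(\<integral>x. f x \<partial>M) \<le> (\<integral>x. s x * g x \<partial>M)"
    unfolding g_def integral_mult_cond_exp_sf_diff(2)[OF A B s_meas s_bd f_int f_bd]
    by (rule integral_mono_AE[OF f_int
          integral_mult_cond_exp_sf_diff(1)[OF A B s_meas s_bd f_int f_bd]])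
  also have "\<dots> \<le> (\<integral>x. \<bar>g x\<bar> \<partial>M)"
  proof (rule integral_mono)
    show "integrable M (\<lambda>x. s x * g x)"
      by (rule Bochner_Integration.integrable_bound[OF g_int])
        (use g_int s_bd in \<open>auto simp: abs_mult mult_left_le_one_le\<close>)
    show "s x * g x \<le> \<bar>g x\<bar>" for x
      using order.trans[OF abs_ge_self, of "s x * g x"] s_bd[of x]
      by (simp add: abs_mult mult_left_le_one_le)
  qed (use g_int in simp)
  finally have "1 \<le> L1_norm M g"
    unfolding L1_norm_def int_f by simp
  also have "\<dots> \<le> opnorm_L1 M A B"
    unfolding opnorm_L1_def L1_norm_def g_def using f_int f_nonneg int_f by (intro SUP_upper) auto
  finally show ?thesis .
qed

lemma sigma_subfield_separating_function:
  assumes A: "sigma_subfield M A" and B: "sigma_subfield M B" and F: "F \<in> A" "F \<notin> B"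
  obtains s D where "s \<in> borel_measurable (sigma (space M) A)" "\<And>x. \<bar>s x\<bar> \<le> 1"
    "D \<in> sets M" "prob D > 0" "AE x in M. x \<in> D \<longrightarrow> s x = 1 \<and> cond_exp_sf M B s x \<le> 0"
proof -
  interpret SB: sigma_finite_subalgebra M "sigma (space M) B"
    by (rule sigma_finite_subalgebra_sigma_subfield[OF B])
  have [measurable]: "F \<in> sets M"
    using A F unfolding sigma_subfield_def by auto
  define s where "s x = 2 * indicator F x - (1::real)" for x
  have s_meas: "s \<in> borel_measurable (sigma (space M) A)"
  proof -
    have [measurable]: "F \<in> sets (sigma (space M) A)"
      using F sets_sigma_subfield[OF A] by simp
    show ?thesis unfolding s_def by measurable
  qed
  have s_F: "x \<in> F \<Longrightarrow> s x = 1" "x \<notin> F \<Longrightarrow> s x = -1" for x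
    by (simp_all add: s_def)
  have s_bd: "\<bar>s x\<bar> \<le> 1" for x
    by (cases "x \<in> F") (simp_all add: s_F)
  have s_int: "integrable M s"
    unfolding s_def by (intro integrable_const_bound[where B=1]) (auto simp: indicator_def)
  define k where "k = cond_exp_sf M B s"
  have k_meas: "k \<in> borel_measurable (sigma (space M) B)"
    unfolding k_def cond_exp_sf_def by (rule borel_measurable_cond_exp)
  have [measurable]: "k \<in> borel_measurable M"
    unfolding k_def cond_exp_sf_def by simp
  define D1 where "D1 = {x \<in> space M. x \<in> F \<and> k x \<le> 0}"
  define D2 where "D2 = {x \<in> space M. x \<notin> F \<and> 0 \<le> k x}"
  have D1_sets[measurable]: "D1 \<in> sets M" and D2_sets[measurable]: "D2 \<in> sets M"
    unfolding D1_def D2_def by measurable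
  have "prob D1 > 0 \<or> prob D2 > 0"
  proof (rule ccontr)
    assume "\<not> (prob D1 > 0 \<or> prob D2 > 0)"
    then have null: "D1 \<in> null_sets M" "D2 \<in> null_sets M"
      by (auto simp: null_sets_def emeasure_eq_measure order.antisym)
    define E where "E = {x \<in> space M. 0 < k x}"
    have "{x \<in> space (sigma (space M) B). 0 < k x} \<in> sets (sigma (space M) B)"
      using k_meas by measurable
    then have "E \<in> B"
      using sets_sigma_subfield[OF B] by (simp add: E_def space_measure_of_conv)
    moreover have "F - E \<in> null_sets M"
      by (rule null_sets_subset[OF null(1)])
        (use sets.sets_into_space[of F M] in \<open>auto simp: D1_def E_def\<close>)
    moreover have "E - F \<in> null_sets M"
      by (rule null_sets_subset[OF null(2)]) (auto simp: D2_def E_def)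
    ultimately have "F \<in> B"
      by (rule sigma_subfield_null_symdiff[OF B])
    with F show False by simp
  qed
  then show thesis
  proof
    assume "prob D1 > 0"
    then show thesis
      by (rule that[OF s_meas s_bd D1_sets]) (auto simp: D1_def s_F k_def)
  next
    assume "prob D2 > 0"
    show thesis
    proof (rule that[OF _ _ D2_sets \<open>prob D2 > 0\<close>])
      show "(\<lambda>x. - s x) \<in> borel_measurable (sigma (space M) A)"
        using s_meas by measurable
      show "\<bar>- s x\<bar> \<le> 1" for x
        using s_bd[of x] by simp
      have "AE x in M. cond_exp_sf M B (\<lambda>x. - s x) x = - k x"
        using SB.real_cond_exp_cmult[OF s_int, of "-1"] by (simp add: k_def cond_exp_sf_def)
      then show "AE x in M. x \<in> D2 \<longrightarrow> - s x = 1 \<and> cond_exp_sf M B (\<lambda>x. - s x) x \<le> 0"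
        by eventually_elim (auto simp: D2_def s_F)
    qed
  qed
qed

lemma opnorm_ge_one_of_sigma_subfield_neq:
  assumes A: "sigma_subfield M A" and B: "sigma_subfield M B" and "A \<noteq> B"
  shows "1 \<le> opnorm_L1 M A B" "1 \<le> opnorm_Linf M A B"
proof -
  have separated: "1 \<le> opnorm_L1 M A' B' \<and> 1 \<le> opnorm_Linf M A' B'"
    if A': "sigma_subfield M A'" and B': "sigma_subfield M B'" and F: "F \<in> A'" "F \<notin> B'" for A' B' F
  proof -
    obtain s D where "s \<in> borel_measurable (sigma (space M) A')" "\<And>x. \<bar>s x\<bar> \<le> 1"
      "D \<in> sets M" "prob D > 0" "AE x in M. x \<in> D \<longrightarrow> s x = 1 \<and> cond_exp_sf M B' s x \<le> 0"
      using sigma_subfield_separating_function[OF A' B' F] by blast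
    then show ?thesis
      using opnorm_L1_ge_one[OF A' B'] opnorm_Linf_ge_one[OF A'] by blast
  qed
  obtain F where "F \<in> A \<and> F \<notin> B \<or> F \<in> B \<and> F \<notin> A"
    using \<open>A \<noteq> B\<close> by blast
  then show "1 \<le> opnorm_L1 M A B" "1 \<le> opnorm_Linf M A B"
    using separated[OF A B, of F] separated[OF B A, of F]
    by (auto simp: opnorm_L1_commute opnorm_Linf_commute)
qed

end

lemma eventually_of_tendsto_bounded_away:
  fixes d :: "'a \<Rightarrow> 'b::linorder_topology"
  assumes "(d \<longlongrightarrow> l) F" and "l < c" and "\<And>x. \<not> P x \<Longrightarrow> c \<le> d x"
  shows "eventually P F"
  using order_tendstoD(2)[OF assms(1,2)]
  by eventually_elim (use assms(3) in \<open>force simp: not_le[symmetric]\<close>)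

theorem mainTheorem12:
  fixes M :: "'a measure"
  assumes "prob_space M"
  shows "(\<forall>A B. sigma_subfield M A \<and> sigma_subfield M B \<and> A \<noteq> B \<longrightarrow>
            opnorm_L1 M A B \<ge> 1 \<and> opnorm_Linf M A B \<ge> 1/2)
     \<and> (\<forall>Bs :: nat \<Rightarrow> 'a set set. (\<forall>n. sigma_subfield M (Bs n)) \<and>
            ((\<lambda>n. opnorm_L1 M (Bs n) (Bs 0)) \<longlonglongrightarrow> 0 \<or>
             (\<lambda>n. opnorm_Linf M (Bs n) (Bs 0)) \<longlonglongrightarrow> 0)
          \<longrightarrow> (\<forall>\<^sub>F n in sequentially. Bs n = Bs 0))"
proof -
  interpret prob_space M by (rule assms)
  have half: "(0::ereal) < 1/2" "(1/2::ereal) \<le> 1" and one: "(0::ereal) < 1"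
    by (simp_all add: divide_ereal_def)
  note bounds = opnorm_ge_one_of_sigma_subfield_neq
  show ?thesis
  proof (intro conjI allI impI; (elim conjE disjE)?)
    fix A B assume "sigma_subfield M A" "sigma_subfield M B" "A \<noteq> B"
    then show "1 \<le> opnorm_L1 M A B" "1/2 \<le> opnorm_Linf M A B"
      using bounds[of A B] half(2) by (auto intro: order.trans)
  next
    fix Bs :: "nat \<Rightarrow> 'a set set"
    assume "\<forall>n. sigma_subfield M (Bs n)"
    then have far: "1 \<le> opnorm_L1 M (Bs n) (Bs 0)" "1/2 \<le> opnorm_Linf M (Bs n) (Bs 0)"
      if "Bs n \<noteq> Bs 0" for n
      using bounds[of "Bs n" "Bs 0"] that half(2) by (auto intro: order.trans)
    show "\<forall>\<^sub>F n in sequentially. Bs n = Bs 0"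
      if "(\<lambda>n. opnorm_L1 M (Bs n) (Bs 0)) \<longlonglongrightarrow> 0"
      using that one by (rule eventually_of_tendsto_bounded_away) (erule far(1))
    show "\<forall>\<^sub>F n in sequentially. Bs n = Bs 0"
      if "(\<lambda>n. opnorm_Linf M (Bs n) (Bs 0)) \<longlonglongrightarrow> 0"
      using that half(1) by (rule eventually_of_tendsto_bounded_away) (erule far(2))
  qed
qed

end
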